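(* Let $d\ge2$, $n\ge1$, $F_0(z_1,\ldots,z_n)=(z_1^d,\ldots,z_n^d)$, and let $\mathbf w_0=(w_1,\ldots,w_n)\in\mathbb{C}^n$ be a periodic point of $F_0$ of period $p$ none of whose coordinates is zero. Then for any multi-index $I=(i_1,\ldots,i_n)\in\mathbb{Z}_{\ge0}^n$ and any $k,m\in\{1,\ldots,n\}$, $$\partial_{m,I}\rho_{k,\mathbf w_0}(F_0)=\begin{cases}0&\text{if }m\ne k,\\ (i_kd^{p-1}-d^p)\sum_{i=0}^{p-1}(\mathbf w_0^{I_k})^{d^i}w_k^{d^i(i_k-d)}&\text{if }m=k.\end{cases}$$
   Context: For a polynomial map $G$ near $F_0$, $\mathbf w(G)$ denotes the analytic continuation of $\mathbf w_0$ as a periodic point of period $p$ (given by the implicit function theorem), and $\rho_{k,\mathbf w_0}(G)$ is the $k$-th diagonal entry of the Jacobian matrix $DG^p$ at $\mathbf w(G)$. For $\mathbf z^I=z_1^{i_1}\cdots z_n^{i_n}$ and the $m$-th unit vector $\mathbf e_m$, $P_{m,I}(\mathbf z)=\mathbf z^I\mathbf e_m$ and $\partial_{m,I}\rho_{k,\mathbf w_0}(G)=\frac{d}{dt}\big|_{t=0}\rho_{k,\mathbf w_0}(G+tP_{m,I})$ (well defined for arbitrary $I$, even if $G+tP_{m,I}$ has higher degree). $I_k$ is the multi-index obtained from $I$ by replacing $i_k$ with $0$. *)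

theory Defs
  imports "HOL-Analysis.Analysis"
begin

text \<open>Points of C^n are vectors of type complex^'n, with 'n a finite index type
  (so n = CARD('n) \<ge> 1).  Multi-indices are functions I :: 'n \<Rightarrow> nat.\<close>

definition F0 :: "nat \<Rightarrow> complex^'n \<Rightarrow> complex^'n" where
  "F0 d z = (\<chi> j. (z $ j) ^ d)"

definition monomial :: "('n::finite \<Rightarrow> nat) \<Rightarrow> complex^'n \<Rightarrow> complex" where
  "monomial I z = (\<Prod>l\<in>UNIV. (z $ l) ^ I l)"

definition Pmon :: "'n::finite \<Rightarrow> ('n \<Rightarrow> nat) \<Rightarrow> complex^'n \<Rightarrow> complex^'n" where
  "Pmon m I z = (\<chi> j. if j = m then monomial I z else 0)"

definition Gpert :: "nat \<Rightarrow> 'n::finite \<Rightarrow> ('n \<Rightarrow> nat) \<Rightarrow> complex \<Rightarrow> complex^'n \<Rightarrow> complex^'n" where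
  "Gpert d m I t z = F0 d z + (\<chi> j. t * (Pmon m I z $ j))"

definition drop_index :: "('n \<Rightarrow> nat) \<Rightarrow> 'n \<Rightarrow> ('n \<Rightarrow> nat)" where
  "drop_index I k = I(k := 0)"

definition periodic_point_of_period :: "('a \<Rightarrow> 'a) \<Rightarrow> nat \<Rightarrow> 'a \<Rightarrow> bool" where
  "periodic_point_of_period f p w \<longleftrightarrow>
     p \<ge> 1 \<and> (f ^^ p) w = w \<and> (\<forall>q. 0 < q \<and> q < p \<longrightarrow> (f ^^ q) w \<noteq> w)"

definition jac_diag :: "(complex^'n \<Rightarrow> complex^'n) \<Rightarrow> 'n \<Rightarrow> complex^'n \<Rightarrow> complex" where
  "jac_diag H k z = deriv (\<lambda>s. H (\<chi> j. if j = k then s else z $ j) $ k) (z $ k)"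

text \<open>A continuation of the periodic point w0 along the family t \<mapsto> G t:
  w(0) = w0, w continuous at 0, and w(t) is a fixed point of (G t)^p for t near 0.
  By the implicit function theorem such a branch is unique near 0.\<close>
definition periodic_continuation ::
  "(complex \<Rightarrow> complex^'n \<Rightarrow> complex^'n) \<Rightarrow> nat \<Rightarrow> complex^'n \<Rightarrow> (complex \<Rightarrow> complex^'n) \<Rightarrow> bool" where
  "periodic_continuation G p w0 w \<longleftrightarrow>
     w 0 = w0 \<and> isCont w 0 \<and> (\<forall>\<^sub>F t in nhds 0. (G t ^^ p) (w t) = w t)"

end

theory Submission
  imports Defs
begin

(* Off the m-th coordinate G_t = F0 + t P_{m,I} agrees with F0, so the other coordinates of a
   continuation w(t) solve z^(d^p) = z and, being continuous, stay equal to those of w0.  Thus w(t)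
   lies on the line through w0 parallel to e_m, on which the m-th coordinate of G_t^p is the
   iterate X_p(t, y) of the maps y |-> y^d + t c_q y^(i_m), where c_q = (w0^(I_m))^(d^q).
   At t = 0 the fixed point a = w_m has multiplier d^p <> 1, so a relaxed fixed-point iteration is
   a contraction near (0, a); this produces the continuation, and divided differences show that its
   m-th coordinate x(t) is differentiable.

   For k <> m the entry rho_k is constant in t.  For k = m it is the product over q < p of the
   derivatives of y |-> y^d + t c_q y^(i_m) along the orbit of x(t); at t = 0 its logarithmic
   derivative is the sum of (d - 1) u_q + (i_m / d) e_q, where u_q is the t-derivative of the q-th
   orbit point divided by a^(d^q) and e_q = c_q (a^(d^q))^(i_m - d).  Since u_(q+1) = d u_q + e_q and
   periodicity of x(t) forces u_p = u_0, telescoping gives (d - 1) sum u_q = - sum e_q, whence the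
   formula. *)

section \<open>Fixed-point branches of one-parameter families\<close>

lemma dist_triple_le:
  fixes t t' :: "'a::real_normed_vector" and y y' :: "'b::real_normed_vector"
    and z z' :: "'c::real_normed_vector"
  shows "dist (t, y, z) (t', y', z') \<le> dist t t' + dist y y' + dist z z'"
proof -
  have "dist (t, y, z) (t', y', z') = norm (t - t', y - y', z - z')"
    by (simp add: dist_norm)
  also have "\<dots> \<le> norm (t - t') + norm (y - y', z - z')"
    by (rule norm_Pair_le)
  also have "norm (y - y', z - z') \<le> norm (y - y') + norm (z - z')"
    by (rule norm_Pair_le)
  finally show ?thesis by (simp add: dist_norm)
qed

lemma continuous_at_triple_bound:
  fixes D :: "'a::real_normed_vector \<Rightarrow> 'b::real_normed_vector \<Rightarrow> 'c::real_normed_vector \<Rightarrow> 'd::metric_space"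
  assumes "isCont (\<lambda>(t, y, z). D t y z) (t0, a, b)" and "e > 0"
  obtains r where "r > 0"
    and "\<And>t y z. dist t t0 < r \<Longrightarrow> dist y a < r \<Longrightarrow> dist z b < r \<Longrightarrow> dist (D t y z) (D t0 a b) < e"
proof -
  obtain \<delta> where "\<delta> > 0" and \<delta>: "\<forall>v. dist v (t0, a, b) < \<delta> \<longrightarrow>
      dist ((\<lambda>(t, y, z). D t y z) v) ((\<lambda>(t, y, z). D t y z) (t0, a, b)) < e"
    using assms unfolding continuous_at_eps_delta by blast
  show ?thesis
  proof (rule that[of "\<delta> / 3"])
    fix t y z assume "dist t t0 < \<delta> / 3" "dist y a < \<delta> / 3" "dist z b < \<delta> / 3"
    then have "dist (t, y, z) (t0, a, b) < \<delta>"
      using dist_triple_le[of t y z t0 a b] by simp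
    then show "dist (D t y z) (D t0 a b) < e"
      using \<delta> by auto
  qed (use \<open>\<delta> > 0\<close> in simp)
qed

text \<open>A damped step of the simplified Newton method for \<open>f y = y\<close>: it has the same fixed points as
  \<open>f\<close>, and it is a contraction wherever the slopes of \<open>f\<close> stay close to \<open>K\<close>.\<close>

definition relaxation :: "(complex \<Rightarrow> complex) \<Rightarrow> complex \<Rightarrow> complex \<Rightarrow> complex" where
  "relaxation f K y = y - (f y - y) / (K - 1)"

lemma relaxation_fixed_iff: "K \<noteq> 1 \<Longrightarrow> relaxation f K y = y \<longleftrightarrow> f y = y"
  by (auto simp: relaxation_def)

lemma relaxation_diff:
  assumes "K \<noteq> 1" and "f y - f z = (y - z) * D"
  shows "relaxation f K y - relaxation f K z = (y - z) * (K - D) / (K - 1)"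
proof -
  have "relaxation f K y - relaxation f K z = (y - z) - ((f y - f z) - (y - z)) / (K - 1)"
    by (simp add: relaxation_def diff_divide_distrib)
  also have "\<dots> = (y - z) * (K - D) / (K - 1)"
    using assms by (simp add: field_simps)
  finally show ?thesis .
qed

context
  fixes f :: "complex \<Rightarrow> complex" and D :: "complex \<Rightarrow> complex \<Rightarrow> complex" and a K :: complex and r :: real
  assumes f_diff: "\<And>y z. f y - f z = (y - z) * D y z"
    and D_near: "\<And>y z. y \<in> cball a r \<Longrightarrow> z \<in> cball a r \<Longrightarrow> norm (D y z - K) \<le> norm (K - 1) / 2"
    and K_ne_1: "K \<noteq> 1"
begin

lemma relaxation_contraction:
  assumes "y \<in> cball a r" and "z \<in> cball a r"
  shows "dist (relaxation f K y) (relaxation f K z) \<le> 1/2 * dist y z"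
proof -
  have "norm (y - z) * norm (K - D y z) / norm (K - 1) \<le> norm (y - z) * (norm (K - 1) / 2) / norm (K - 1)"
    using D_near[OF assms] by (intro divide_right_mono mult_left_mono) (auto simp: norm_minus_commute)
  then show ?thesis
    using K_ne_1 by (simp add: dist_norm relaxation_diff[OF K_ne_1 f_diff] norm_mult norm_divide)
qed

lemma relaxation_centre: "dist (relaxation f K a) a = dist (f a) a / norm (K - 1)"
  by (simp add: relaxation_def dist_norm norm_divide)

lemma fixed_point_dist_le:
  assumes "y \<in> cball a r" and "f y = y"
  shows "dist y a \<le> 2 * (dist (f a) a / norm (K - 1))"
proof -
  have "relaxation f K y = y"
    using assms(2) K_ne_1 by (simp add: relaxation_fixed_iff)
  then have "dist y a \<le> dist (relaxation f K y) (relaxation f K a) + dist (relaxation f K a) a"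
    using dist_triangle[of "relaxation f K y" a "relaxation f K a"] by simp
  also have "\<dots> \<le> 1/2 * dist y a + dist (f a) a / norm (K - 1)"
  proof -
    have "0 \<le> r"
      using assms(1) zero_le_dist[of a y] unfolding mem_cball by linarith
    then have "a \<in> cball a r"
      by simp
    then show ?thesis
      using relaxation_contraction[OF assms(1)] unfolding relaxation_centre by simp
  qed
  finally show ?thesis by simp
qed

lemma unique_fixed_point_in_cball:
  assumes "dist (f a) a < norm (K - 1) * r / 2"
  shows "\<exists>!y \<in> cball a r. f y = y"
proof -
  have "0 < norm (K - 1) * r"
    using assms zero_le_dist[of "f a" a] by linarith
  then have "r \<ge> 0"
    by (simp add: zero_less_mult_iff)
  have "\<exists>!y \<in> cball a r. relaxation f K y = y"
  proof (rule Banach_fix[of _ "1/2"])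
    show "relaxation f K ` cball a r \<subseteq> cball a r"
    proof clarify
      fix y assume y: "y \<in> cball a r"
      have "dist (relaxation f K y) a \<le> dist (relaxation f K y) (relaxation f K a) + dist (relaxation f K a) a"
        by (rule dist_triangle)
      also have "\<dots> \<le> 1/2 * dist y a + dist (f a) a / norm (K - 1)"
        using relaxation_contraction[OF y, of a] \<open>r \<ge> 0\<close> unfolding relaxation_centre by simp
      also have "\<dots> \<le> r"
      proof -
        have "dist (f a) a / norm (K - 1) < r / 2"
          using assms K_ne_1 by (simp add: field_simps)
        moreover have "dist y a \<le> r"
          using y by (simp add: dist_commute)
        ultimately show ?thesis by linarith
      qed
      finally show "relaxation f K y \<in> cball a r"
        by (simp add: dist_commute)
    qed
  qed (use \<open>r \<ge> 0\<close> relaxation_contraction in \<open>simp_all add: compact_imp_complete\<close>)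
  then show ?thesis
    using K_ne_1 by (simp add: relaxation_fixed_iff)
qed

end

lemma fixed_points_near_centre:
  fixes F :: "complex \<Rightarrow> complex \<Rightarrow> complex" and D :: "complex \<Rightarrow> complex \<Rightarrow> complex \<Rightarrow> complex"
  assumes F_diff: "\<And>t y z. F t y - F t z = (y - z) * D t y z"
    and D_cont: "isCont (\<lambda>(t, y, z). D t y z) (0, a, a)"
    and D_ne_1: "D 0 a a \<noteq> 1"
    and F_tendsto: "((\<lambda>t. F t a) \<longlongrightarrow> a) (nhds 0)"
  obtains r where "r > 0"
    and "eventually (\<lambda>t. \<exists>!y \<in> cball a r. F t y = y) (nhds 0)"
    and "eventually (\<lambda>t. \<forall>y \<in> cball a r. F t y = y \<longrightarrow>
      dist y a \<le> 2 * (dist (F t a) a / norm (D 0 a a - 1))) (nhds 0)"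
proof -
  define K where "K = D 0 a a"
  have "K \<noteq> 1" and K1: "norm (K - 1) > 0"
    using D_ne_1 by (simp_all add: K_def)
  obtain \<rho> where "\<rho> > 0" and \<rho>: "\<And>t y z. dist t 0 < \<rho> \<Longrightarrow> dist y a < \<rho> \<Longrightarrow> dist z a < \<rho> \<Longrightarrow>
      dist (D t y z) K < norm (K - 1) / 2"
    using continuous_at_triple_bound[OF D_cont, of "norm (K - 1) / 2"] K1 by (auto simp: K_def)
  define r where "r = \<rho> / 2"
  have "r > 0"
    using \<open>\<rho> > 0\<close> by (simp add: r_def)
  have D_near: "norm (D t y z - K) \<le> norm (K - 1) / 2"
    if "norm t < r" "y \<in> cball a r" "z \<in> cball a r" for t y z
    using \<rho>[of t y z] that \<open>\<rho> > 0\<close> by (simp add: r_def dist_norm norm_minus_commute)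
  have "eventually (\<lambda>t. dist (F t a) a < norm (K - 1) * r / 2) (nhds 0)"
    using F_tendsto \<open>r > 0\<close> K1 by (intro tendstoD) auto
  moreover have "eventually (\<lambda>t::complex. norm t < r) (nhds 0)"
    using \<open>r > 0\<close> unfolding eventually_nhds_metric by (auto simp: dist_norm)
  ultimately have "eventually (\<lambda>t. \<exists>!y \<in> cball a r. F t y = y) (nhds 0)"
  proof eventually_elim
    case (elim t)
    then show ?case
      by (intro unique_fixed_point_in_cball[where f = "F t" and D = "D t", OF F_diff D_near \<open>K \<noteq> 1\<close>])
        simp_all
  qed
  moreover have "eventually (\<lambda>t. \<forall>y \<in> cball a r. F t y = y \<longrightarrow>
      dist y a \<le> 2 * (dist (F t a) a / norm (K - 1))) (nhds 0)"
    using \<open>eventually (\<lambda>t::complex. norm t < r) (nhds 0)\<close>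
  proof eventually_elim
    case (elim t)
    then show ?case
      using fixed_point_dist_le[where f = "F t" and D = "D t", OF F_diff D_near \<open>K \<noteq> 1\<close>] by simp
  qed
  ultimately show ?thesis
    using \<open>r > 0\<close> that by (simp add: K_def)
qed

lemma fixed_point_branch_exists:
  fixes F :: "complex \<Rightarrow> complex \<Rightarrow> complex" and D :: "complex \<Rightarrow> complex \<Rightarrow> complex \<Rightarrow> complex"
  assumes F_diff: "\<And>t y z. F t y - F t z = (y - z) * D t y z"
    and D_cont: "isCont (\<lambda>(t, y, z). D t y z) (0, a, a)"
    and D_ne_1: "D 0 a a \<noteq> 1"
    and F_cont: "isCont (\<lambda>t. F t a) 0"
    and fixed: "F 0 a = a"
  obtains x where "x 0 = a" and "isCont x 0" and "eventually (\<lambda>t. F t (x t) = x t) (nhds 0)"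
proof -
  have F_tendsto: "((\<lambda>t. F t a) \<longlongrightarrow> a) (nhds 0)"
    using F_cont tendsto_at_iff_tendsto_nhds[of "\<lambda>t. F t a" 0] by (simp add: continuous_at fixed)
  obtain r where "r > 0" and unique: "eventually (\<lambda>t. \<exists>!y \<in> cball a r. F t y = y) (nhds 0)"
    and bound: "eventually (\<lambda>t. \<forall>y \<in> cball a r. F t y = y \<longrightarrow>
      dist y a \<le> 2 * (dist (F t a) a / norm (D 0 a a - 1))) (nhds 0)"
    by (rule fixed_points_near_centre[OF F_diff D_cont D_ne_1 F_tendsto])
  define x where "x t = (THE y. y \<in> cball a r \<and> F t y = y)" for t
  have x_fixed: "eventually (\<lambda>t. x t \<in> cball a r \<and> F t (x t) = x t) (nhds 0)"
    using unique by eventually_elim (unfold x_def, rule theI')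
  have "x 0 = a"
    unfolding x_def using \<open>r > 0\<close> fixed
    by (intro the1_equality[OF eventually_nhds_x_imp_x[OF unique]]) simp
  moreover have "isCont x 0"
  proof -
    have "eventually (\<lambda>t. norm (x t - a) \<le> 2 * (dist (F t a) a / norm (D 0 a a - 1))) (nhds 0)"
      using x_fixed bound by eventually_elim (simp add: dist_norm)
    moreover have "((\<lambda>t. 2 * (dist (F t a) a / norm (D 0 a a - 1))) \<longlongrightarrow> 0) (nhds 0)"
      using tendsto_dist[OF F_tendsto tendsto_const, of a]
      by (intro tendsto_mult_right_zero tendsto_divide_zero) simp
    ultimately have "((\<lambda>t. x t - a) \<longlongrightarrow> 0) (nhds 0)"
      by (rule Lim_null_comparison)
    then show ?thesis
      using \<open>x 0 = a\<close> unfolding continuous_at tendsto_at_iff_tendsto_nhds by (simp add: LIM_zero_iff)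
  qed
  moreover have "eventually (\<lambda>t. F t (x t) = x t) (nhds 0)"
    using x_fixed by eventually_elim simp
  ultimately show ?thesis
    by (rule that)
qed

lemma fixed_point_branch_differentiable:
  fixes F :: "complex \<Rightarrow> complex \<Rightarrow> complex" and D :: "complex \<Rightarrow> complex \<Rightarrow> complex \<Rightarrow> complex"
  assumes F_diff: "\<And>t y z. F t y - F t z = (y - z) * D t y z"
    and D_cont: "isCont (\<lambda>(t, y, z). D t y z) (0, a, a)"
    and D_ne_1: "D 0 a a \<noteq> 1"
    and F_time: "\<And>t. F t a - F 0 a = t * E t"
    and E_cont: "isCont E 0"
    and fixed: "F 0 a = a"
    and x_0: "x 0 = a" and x_cont: "isCont x 0"
    and x_fixed: "eventually (\<lambda>t. F t (x t) = x t) (nhds 0)"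
  shows "x field_differentiable (at 0)"
proof -
  \<comment> \<open>Caratheodory: \<open>x t = a + t * q t\<close> with \<open>q\<close> continuous at \<open>0\<close>\<close>
  define den where "den t = 1 - D t (x t) a" for t
  define q where "q t = E t / den t" for t
  have "isCont (\<lambda>t. D t (x t) a) 0"
    using continuous_at_compose[of 0 "\<lambda>t. (t, x t, a)" "\<lambda>(t, y, z). D t y z"] D_cont x_cont x_0
    by (simp add: o_def)
  then have "isCont den 0"
    unfolding den_def by (intro continuous_intros)
  moreover have "den 0 \<noteq> 0"
    using D_ne_1 x_0 by (simp add: den_def)
  ultimately have "eventually (\<lambda>t. den t \<noteq> 0) (nhds 0)"
    unfolding continuous_at tendsto_at_iff_tendsto_nhds by (rule tendsto_imp_eventually_ne)
  with x_fixed have "eventually (\<lambda>t. x t = a + t * q t) (nhds 0)"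
  proof eventually_elim
    case (elim t)
    have "x t - a = F t (x t) - F t a + (F t a - F 0 a)"
      using elim fixed by simp
    also have "\<dots> = (x t - a) * D t (x t) a + t * E t"
      by (simp add: F_diff F_time)
    finally have "(x t - a) * den t = t * E t"
      by (simp add: den_def algebra_simps)
    then show ?case
      using elim by (simp add: q_def field_simps)
  qed
  moreover have "isCont q 0"
    unfolding q_def using \<open>isCont den 0\<close> \<open>den 0 \<noteq> 0\<close> E_cont
    by (intro continuous_intros)
  then have "((\<lambda>t. a + t * q t) has_field_derivative q 0) (at 0)"
    unfolding CARAT_DERIV by (intro exI[of _ q]) auto
  ultimately have "(x has_field_derivative q 0) (at 0)"
    by (subst DERIV_cong_ev[OF refl _ refl]) auto
  then show ?thesis
    unfolding field_differentiable_def by blast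
qed

section \<open>Iterating \<open>y \<mapsto> y ^ d + t c_q y ^ i\<close>\<close>

definition power_divdiff :: "complex \<Rightarrow> complex \<Rightarrow> nat \<Rightarrow> complex" where
  "power_divdiff u v n = (\<Sum>j<n. v ^ (n - Suc j) * u ^ j)"

lemma power_diff_eq_divdiff: "u ^ n - v ^ n = (u - v) * power_divdiff u v n"
  unfolding power_divdiff_def by (rule power_diff_sumr2)

lemma power_divdiff_same: "power_divdiff u u n = of_nat n * u ^ (n - 1)"
proof -
  have "power_divdiff u u n = (\<Sum>j<n. u ^ (n - 1))"
    unfolding power_divdiff_def by (intro sum.cong refl) (simp flip: power_add)
  then show ?thesis by simp
qed

lemma tendsto_power_divdiff [tendsto_intros]:
  "(f \<longlongrightarrow> u) F \<Longrightarrow> (g \<longlongrightarrow> v) F \<Longrightarrow> ((\<lambda>x. power_divdiff (f x) (g x) n) \<longlongrightarrow> power_divdiff u v n) F"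
  unfolding power_divdiff_def by (intro tendsto_intros)

context
  fixes d i :: nat and c :: "nat \<Rightarrow> complex"
begin

text \<open>On the line through \<open>w0\<close> parallel to \<open>e_m\<close> this is the \<open>m\<close>-th coordinate of
  \<open>(F0 + t P_{m,I})^s\<close>, with \<open>c q = (w0^I_m)^(d^q)\<close>; see \<open>Gpert_iterate_slice\<close>.\<close>

primrec orbit :: "nat \<Rightarrow> complex \<Rightarrow> complex \<Rightarrow> complex" where
  "orbit 0 t y = y"
| "orbit (Suc s) t y = orbit s t y ^ d + t * c s * orbit s t y ^ i"

primrec orbit_divdiff :: "nat \<Rightarrow> complex \<Rightarrow> complex \<Rightarrow> complex \<Rightarrow> complex" where
  "orbit_divdiff 0 t y z = 1"
| "orbit_divdiff (Suc s) t y z = orbit_divdiff s t y z *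
     (power_divdiff (orbit s t y) (orbit s t z) d + t * c s * power_divdiff (orbit s t y) (orbit s t z) i)"

primrec orbit_time_divdiff :: "nat \<Rightarrow> complex \<Rightarrow> complex \<Rightarrow> complex" where
  "orbit_time_divdiff 0 t y = 0"
| "orbit_time_divdiff (Suc s) t y =
     orbit_time_divdiff s t y * power_divdiff (orbit s t y) (orbit s 0 y) d + c s * orbit s t y ^ i"

lemma orbit_zero_time: "orbit s 0 y = y ^ d ^ s"
  by (induction s) (simp_all flip: power_mult add: mult.commute)

lemma orbit_diff: "orbit s t y - orbit s t z = (y - z) * orbit_divdiff s t y z"
proof (induction s)
  case (Suc s)
  let ?Y = "orbit s t y" and ?Z = "orbit s t z"
  have "orbit (Suc s) t y - orbit (Suc s) t z = (?Y ^ d - ?Z ^ d) + t * c s * (?Y ^ i - ?Z ^ i)"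
    by (simp add: algebra_simps)
  also have "\<dots> = (?Y - ?Z) * (power_divdiff ?Y ?Z d + t * c s * power_divdiff ?Y ?Z i)"
    by (simp add: power_diff_eq_divdiff algebra_simps)
  finally show ?case
    using Suc by (simp add: mult.assoc)
qed simp

lemma orbit_time_diff: "orbit s t y - orbit s 0 y = t * orbit_time_divdiff s t y"
proof (induction s)
  case (Suc s)
  let ?Y = "orbit s t y" and ?Z = "orbit s 0 y"
  have "orbit (Suc s) t y - orbit (Suc s) 0 y = (?Y ^ d - ?Z ^ d) + t * c s * ?Y ^ i"
    by (simp add: algebra_simps)
  also have "\<dots> = (?Y - ?Z) * power_divdiff ?Y ?Z d + t * c s * ?Y ^ i"
    by (simp only: power_diff_eq_divdiff)
  finally show ?case
    using Suc by (simp add: algebra_simps)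
qed simp

lemma tendsto_orbit [tendsto_intros]:
  "(T \<longlongrightarrow> t) F \<Longrightarrow> (Y \<longlongrightarrow> y) F \<Longrightarrow> ((\<lambda>x. orbit s (T x) (Y x)) \<longlongrightarrow> orbit s t y) F"
  by (induction s) (auto intro!: tendsto_intros)

lemma tendsto_orbit_divdiff [tendsto_intros]:
  "(T \<longlongrightarrow> t) F \<Longrightarrow> (Y \<longlongrightarrow> y) F \<Longrightarrow> (Z \<longlongrightarrow> z) F \<Longrightarrow>
   ((\<lambda>x. orbit_divdiff s (T x) (Y x) (Z x)) \<longlongrightarrow> orbit_divdiff s t y z) F"
  by (induction s) (auto intro!: tendsto_intros)

lemma tendsto_orbit_time_divdiff [tendsto_intros]:
  "(T \<longlongrightarrow> t) F \<Longrightarrow> ((\<lambda>x. orbit_time_divdiff s (T x) y) \<longlongrightarrow> orbit_time_divdiff s t y) F"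
  by (induction s) (auto intro!: tendsto_intros)

lemma isCont_orbit_divdiff: "isCont (\<lambda>(t, y, z). orbit_divdiff s t y z) v"
  unfolding isCont_def case_prod_beta by (intro tendsto_intros tendsto_ident_at)

lemma has_field_derivative_orbit: "(orbit s t has_field_derivative orbit_divdiff s t y y) (at y)"
proof -
  have "isCont (\<lambda>z. orbit_divdiff s t z y) y"
    unfolding isCont_def by (intro tendsto_intros tendsto_ident_at)
  then show ?thesis
    unfolding CARAT_DERIV by (intro exI[of _ "\<lambda>z. orbit_divdiff s t z y"]) (auto simp: orbit_diff mult.commute)
qed

lemma orbit_divdiff_zero_time: "orbit_divdiff s 0 y y = of_nat (d ^ s) * y ^ (d ^ s - 1)"
proof -
  have "((\<lambda>y. y ^ d ^ s) has_field_derivative orbit_divdiff s 0 y y) (at y)"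
    using has_field_derivative_orbit[of s 0 y] by (simp add: orbit_zero_time[abs_def])
  moreover have "((\<lambda>y. y ^ d ^ s) has_field_derivative of_nat (d ^ s) * y ^ (d ^ s - 1)) (at y)"
    using DERIV_power[OF DERIV_ident, of "d ^ s" y UNIV] by simp
  ultimately show ?thesis
    by (rule DERIV_unique)
qed

lemma orbit_divdiff_periodic:
  assumes "a \<noteq> 0" and "a ^ d ^ p = a"
  shows "orbit_divdiff p 0 a a = of_nat d ^ p"
proof (cases "d ^ p = 0")
  case True
  then show ?thesis
    unfolding orbit_divdiff_zero_time of_nat_power[symmetric] by simp
next
  case False
  then have "a * a ^ (d ^ p - 1) = a * 1"
    using assms(2) by (simp flip: power_Suc)
  then show ?thesis
    using assms(1) by (simp add: orbit_divdiff_zero_time)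
qed

text \<open>The quantity \<open>u_q\<close> of the proof idea, for a branch with \<open>x 0 = a\<close> and \<open>x' 0 = v\<close>.\<close>

primrec orbit_log_velocity :: "complex \<Rightarrow> complex \<Rightarrow> nat \<Rightarrow> complex" where
  "orbit_log_velocity a v 0 = v / a"
| "orbit_log_velocity a v (Suc q) =
     of_nat d * orbit_log_velocity a v q + c q * (a ^ d ^ q) powi (int i - int d)"

context
  fixes a v :: complex and x :: "complex \<Rightarrow> complex"
  assumes d: "d \<ge> 2" and a: "a \<noteq> 0"
    and x_0: "x 0 = a" and x_deriv: "(x has_field_derivative v) (at 0)"
begin

lemma has_field_derivative_orbit_branch:
  "((\<lambda>t. orbit q t (x t)) has_field_derivative a ^ d ^ q * orbit_log_velocity a v q) (at 0)"
proof (induction q)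
  case 0
  then show ?case
    using x_deriv a by simp
next
  case (Suc q)
  let ?A = "a ^ d ^ q" and ?u = "orbit_log_velocity a v q"
  have "?A \<noteq> 0"
    using a by simp
  have "of_nat d * (?A * ?u * ?A ^ (d - 1)) + c q * ?A ^ i =
      ?A ^ d * (of_nat d * ?u + c q * ?A powi (int i - int d))"
  proof -
    have "?A ^ (d - 1) = ?A ^ d / ?A" and "?A powi (int i - int d) = ?A ^ i / ?A ^ d"
      using d \<open>?A \<noteq> 0\<close> by (simp_all add: power_diff power_int_diff)
    then show ?thesis
      using \<open>?A \<noteq> 0\<close> by (simp add: field_simps)
  qed
  moreover have "a ^ d ^ Suc q = ?A ^ d"
    by (simp flip: power_mult add: mult.commute)
  ultimately show ?case
    by (auto intro!: derivative_eq_intros Suc.IH simp: orbit_zero_time x_0)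
qed

lemma orbit_divdiff_Suc_diag:
  "orbit_divdiff (Suc q) t y y = orbit_divdiff q t y y *
     (of_nat d * orbit q t y ^ (d - 1) + t * c q * (of_nat i * orbit q t y ^ (i - 1)))"
  by (simp add: power_divdiff_same)

lemma has_field_derivative_orbit_divdiff_branch:
  "((\<lambda>t. orbit_divdiff q t (x t) (x t)) has_field_derivative
     orbit_divdiff q 0 a a * (\<Sum>j<q. (of_nat d - 1) * orbit_log_velocity a v j +
       of_nat i / of_nat d * c j * (a ^ d ^ j) powi (int i - int d))) (at 0)"
proof (induction q)
  case (Suc q)
  let ?A = "a ^ d ^ q" and ?u = "orbit_log_velocity a v q"
  let ?M = "(of_nat d - 1) * ?u + of_nat i / of_nat d * c q * ?A powi (int i - int d)"
  have "?A \<noteq> 0"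
    using a by simp
  have factor_deriv: "of_nat d * (of_nat (d - 1) * (?A * ?u * ?A ^ (d - 1 - 1))) + c q * (of_nat i * ?A ^ (i - 1)) =
      of_nat d * ?A ^ (d - 1) * ?M"
  proof -
    have e1: "?A ^ (d - 1) = ?A ^ d / ?A"
      using d \<open>?A \<noteq> 0\<close> by (simp add: power_diff)
    have e2: "?A ^ (d - 1 - 1) = ?A ^ d / (?A * ?A)"
      using d \<open>?A \<noteq> 0\<close> by (simp add: power_diff flip: diff_diff_left power2_eq_square)
    have e3: "of_nat i * ?A ^ (i - 1) = of_nat i * ?A ^ i / ?A"
      using \<open>?A \<noteq> 0\<close> by (cases i) auto
    have e4: "?A powi (int i - int d) = ?A ^ i / ?A ^ d"
      using \<open>?A \<noteq> 0\<close> by (simp add: power_int_diff)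
    have e5: "(of_nat (d - 1) :: complex) = of_nat d - 1"
      using d by (simp add: of_nat_diff)
    show ?thesis
      unfolding e1 e2 e4 e5 using e3 d \<open>?A \<noteq> 0\<close> by (auto simp: field_simps)
  qed
  have "((\<lambda>t. of_nat d * orbit q t (x t) ^ (d - 1) + t * c q * (of_nat i * orbit q t (x t) ^ (i - 1)))
      has_field_derivative
        of_nat d * (of_nat (d - 1) * (?A * ?u * ?A ^ (d - 1 - 1))) + c q * (of_nat i * ?A ^ (i - 1))) (at 0)"
    by (auto intro!: derivative_eq_intros has_field_derivative_orbit_branch simp: orbit_zero_time x_0)
  then have factor: "((\<lambda>t. of_nat d * orbit q t (x t) ^ (d - 1) + t * c q * (of_nat i * orbit q t (x t) ^ (i - 1)))
      has_field_derivative of_nat d * ?A ^ (d - 1) * ?M) (at 0)"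
    unfolding factor_deriv .
  show ?case
    unfolding orbit_divdiff_Suc_diag using DERIV_mult[OF Suc.IH factor]
    by (rule DERIV_cong) (simp add: x_0 orbit_zero_time algebra_simps)
qed simp

lemma has_field_derivative_orbit_multiplier:
  assumes periodic: "a ^ d ^ p = a"
    and x_fixed: "eventually (\<lambda>t. orbit p t (x t) = x t) (nhds 0)"
  shows "((\<lambda>t. orbit_divdiff p t (x t) (x t)) has_field_derivative
     (of_nat i * of_nat d ^ (p - 1) - of_nat d ^ p) * (\<Sum>q<p. c q * (a ^ d ^ q) powi (int i - int d))) (at 0)"
proof -
  define u where "u = orbit_log_velocity a v"
  define e where "e q = c q * (a ^ d ^ q) powi (int i - int d)" for q
  \<comment> \<open>the branch is periodic, so its normalised velocity returns to its initial value\<close>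
  have "(x has_field_derivative a ^ d ^ p * u p) (at 0)"
    using has_field_derivative_orbit_branch[of p] x_fixed unfolding u_def
    by (rule DERIV_cong_ev[OF refl _ refl, THEN iffD1, rotated])
  then have "a * u p = v"
    using x_deriv periodic by (metis DERIV_unique)
  then have "u p = u 0"
    using a by (simp add: u_def field_simps)
  then have "(\<Sum>q<p. u (Suc q) - u q) = 0"
    by (simp add: sum_lessThan_telescope)
  moreover have "u (Suc q) - u q = (of_nat d - 1) * u q + e q" for q
    by (simp add: u_def e_def algebra_simps)
  ultimately have "(\<Sum>q<p. (of_nat d - 1) * u q + e q) = 0"
    by simp
  then have sum_u: "(of_nat d - 1) * (\<Sum>q<p. u q) = - (\<Sum>q<p. e q)"
    by (simp add: sum.distrib sum_distrib_left eq_neg_iff_add_eq_0)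
  have d_power: "(of_nat d :: complex) ^ p = of_nat d * of_nat d ^ (p - 1)" if "p \<noteq> 0"
    using that by (simp add: power_eq_if)
  have "orbit_divdiff p 0 a a = of_nat d ^ p"
    using a periodic by (rule orbit_divdiff_periodic)
  moreover have "of_nat d ^ p * ((of_nat d - 1) * (\<Sum>q<p. u q) + of_nat i / of_nat d * (\<Sum>q<p. e q)) =
      (of_nat i * of_nat d ^ (p - 1) - of_nat d ^ p) * (\<Sum>q<p. e q)"
  proof (cases "p = 0")
    case False
    then show ?thesis
      unfolding sum_u d_power[OF False] using d by (simp add: field_simps)
  qed simp
  ultimately show ?thesis
    using has_field_derivative_orbit_divdiff_branch[of p]
    by (simp add: u_def e_def sum.distrib sum_distrib_left mult.assoc)
qed

end

end

section \<open>Periodic continuations of \<open>F0\<close>\<close>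

lemma eventually_eq_if_finite_values:
  fixes f :: "'a::t2_space \<Rightarrow> 'b::t1_space"
  assumes "isCont f x" and "finite S" and "eventually (\<lambda>t. f t \<in> S) (nhds x)"
  shows "eventually (\<lambda>t. f t = f x) (nhds x)"
proof -
  have "open (- (S - {f x}))"
    using \<open>finite S\<close> by (intro open_Compl finite_imp_closed) auto
  then obtain U where "open U" "x \<in> U" "\<forall>t\<in>U. f t \<in> - (S - {f x})"
    using continuous_at_open[THEN iffD1, OF \<open>isCont f x\<close>, rule_format, of "- (S - {f x})"]
    by auto
  then have "eventually (\<lambda>t. f t \<notin> S - {f x}) (nhds x)"
    unfolding eventually_nhds by blast
  with assms(3) show ?thesis
    by eventually_elim auto
qed

lemma finite_power_fixed_points:
  assumes "N \<ge> 2"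
  shows "finite {z::complex. z ^ N = z}"
proof (rule finite_subset)
  show "{z::complex. z ^ N = z} \<subseteq> insert 0 {z. z ^ (N - 1) = 1}"
  proof safe
    fix z :: complex assume "z ^ N = z" "z \<noteq> 0"
    then have "z * z ^ (N - 1) = z * 1" using assms by (cases N) auto
    with \<open>z \<noteq> 0\<close> show "z ^ (N - 1) = 1" by simp
  qed
  show "finite (insert 0 {z::complex. z ^ (N - 1) = 1})"
    using assms by (intro finite_insert[THEN iffD2] finite_roots_unity) auto
qed

definition vec_upd :: "'a ^ 'n \<Rightarrow> 'n \<Rightarrow> 'a \<Rightarrow> 'a ^ 'n" where
  "vec_upd w m y = (\<chi> j. if j = m then y else w $ j)"

definition slice_coeff :: "nat \<Rightarrow> complex ^ 'n \<Rightarrow> ('n::finite \<Rightarrow> nat) \<Rightarrow> 'n \<Rightarrow> nat \<Rightarrow> complex" where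
  "slice_coeff d w0 I m q = monomial (drop_index I m) w0 ^ d ^ q"

lemma Gpert_nth: "Gpert d m I t z $ j = (z $ j) ^ d + t * (if j = m then monomial I z else 0)"
  by (simp add: Gpert_def F0_def Pmon_def)

lemma F0_iterate_nth: "(F0 d ^^ s) z $ j = (z $ j) ^ d ^ s"
  by (induction s) (simp_all add: F0_def flip: power_mult add: mult.commute)

lemma Gpert_iterate_nth_other: "j \<noteq> m \<Longrightarrow> (Gpert d m I t ^^ s) z $ j = (z $ j) ^ d ^ s"
  by (induction s) (simp_all add: Gpert_nth flip: power_mult add: mult.commute)

lemma monomial_slice:
  "monomial I (\<chi> j. if j = m then y else (w0 $ j) ^ d ^ s) = y ^ I m * slice_coeff d w0 I m s"
proof -
  have "monomial I (\<chi> j. if j = m then y else (w0 $ j) ^ d ^ s) =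
      y ^ I m * (\<Prod>l\<in>UNIV - {m}. ((w0 $ l) ^ d ^ s) ^ I l)"
    unfolding monomial_def by (subst prod.remove[of UNIV m]) (auto intro!: prod.cong)
  moreover have "slice_coeff d w0 I m s = (\<Prod>l\<in>UNIV - {m}. ((w0 $ l) ^ d ^ s) ^ I l)"
    unfolding slice_coeff_def monomial_def drop_index_def prod_power_distrib
    by (subst prod.remove[of UNIV m]) (auto intro!: prod.cong simp flip: power_mult simp: mult.commute)
  ultimately show ?thesis
    by simp
qed

lemma Gpert_iterate_slice:
  "(Gpert d m I t ^^ s) (vec_upd w0 m y) =
     (\<chi> j. if j = m then orbit d (I m) (slice_coeff d w0 I m) s t y else (w0 $ j) ^ d ^ s)"
proof (induction s)
  case (Suc s)
  show ?case
    by (simp add: Suc.IH vec_eq_iff Gpert_nth monomial_slice flip: power_mult add: mult.commute mult.left_commute)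
qed (simp add: vec_upd_def vec_eq_iff)

lemma jac_diag_Gpert_iterate_other:
  assumes "k \<noteq> m"
  shows "jac_diag (Gpert d m I t ^^ s) k z = of_nat (d ^ s) * (z $ k) ^ (d ^ s - 1)"
proof -
  have "((\<lambda>y. y ^ d ^ s) has_field_derivative of_nat (d ^ s) * (z $ k) ^ (d ^ s - 1)) (at (z $ k))"
    using DERIV_power[OF DERIV_ident, of "d ^ s" "z $ k" UNIV] by simp
  then show ?thesis
    unfolding jac_diag_def using assms by (simp add: Gpert_iterate_nth_other DERIV_imp_deriv)
qed

lemma jac_diag_Gpert_iterate_slice:
  "jac_diag (Gpert d m I t ^^ s) m (vec_upd w0 m y) = orbit_divdiff d (I m) (slice_coeff d w0 I m) s t y y"
proof -
  have "(\<chi> j. if j = m then y' else vec_upd w0 m y $ j) = vec_upd w0 m y'" for y'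
    by (simp add: vec_upd_def vec_eq_iff)
  then show ?thesis
    unfolding jac_diag_def by (simp add: Gpert_iterate_slice DERIV_imp_deriv[OF has_field_derivative_orbit])
      (simp add: vec_upd_def)
qed

context
  fixes d p :: nat and w0 :: "complex ^ 'n" and I :: "'n \<Rightarrow> nat" and m :: 'n
  assumes d: "d \<ge> 2" and p: "p \<ge> 1" and nonzero: "\<forall>j. w0 $ j \<noteq> 0"
    and periodic: "(F0 d ^^ p) w0 = w0"
begin

lemma coordinate_periodic: "(w0 $ j) ^ d ^ p = w0 $ j"
  using F0_iterate_nth[where d = d and s = p and z = w0 and j = j] periodic by simp

lemma two_le_degree_power: "2 \<le> d ^ p"
proof -
  have "d \<le> d ^ p"
    using power_increasing[of 1 p d] d p by simp
  then show ?thesis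
    using d by linarith
qed

lemma slice_orbit_fixed: "orbit d (I m) (slice_coeff d w0 I m) p 0 (w0 $ m) = w0 $ m"
  by (simp add: orbit_zero_time coordinate_periodic)

lemma slice_orbit_divdiff_ne_1: "orbit_divdiff d (I m) (slice_coeff d w0 I m) p 0 (w0 $ m) (w0 $ m) \<noteq> 1"
proof -
  have "d ^ p \<noteq> 1"
    using two_le_degree_power by linarith
  then have "(of_nat (d ^ p) :: complex) \<noteq> 1"
    by (metis of_nat_1 of_nat_eq_iff)
  then show ?thesis
    using nonzero coordinate_periodic by (simp add: orbit_divdiff_periodic)
qed

lemma periodic_continuation_exists: "\<exists>w. periodic_continuation (Gpert d m I) p w0 w"
proof -
  let ?c = "slice_coeff d w0 I m" and ?a = "w0 $ m"
  have F_cont: "isCont (\<lambda>t. orbit d (I m) ?c p t ?a) 0"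
    unfolding isCont_def by (intro tendsto_intros tendsto_ident_at)
  obtain x where x_0: "x 0 = ?a" and x_cont: "isCont x 0"
    and x_fixed: "eventually (\<lambda>t. orbit d (I m) ?c p t (x t) = x t) (nhds 0)"
    by (rule fixed_point_branch_exists[OF orbit_diff isCont_orbit_divdiff slice_orbit_divdiff_ne_1
          F_cont slice_orbit_fixed])
  define w where "w t = vec_upd w0 m (x t)" for t
  have "w 0 = w0"
    using x_0 by (simp add: w_def vec_upd_def vec_eq_iff)
  moreover have "isCont w 0"
    using x_cont unfolding w_def vec_upd_def isCont_def by (auto intro!: tendsto_intros)
  moreover have "eventually (\<lambda>t. (Gpert d m I t ^^ p) (w t) = w t) (nhds 0)"
    using x_fixed
    by eventually_elim
      (simp add: w_def Gpert_iterate_slice, simp add: coordinate_periodic vec_upd_def vec_eq_iff)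
  ultimately show ?thesis
    unfolding periodic_continuation_def by blast
qed

lemma periodic_continuation_other_coordinates:
  assumes "periodic_continuation (Gpert d m I) p w0 w"
  shows "eventually (\<lambda>t. \<forall>j. j \<noteq> m \<longrightarrow> w t $ j = w0 $ j) (nhds 0)"
proof -
  have w_0: "w 0 = w0" and w_cont: "isCont w 0"
    and w_fixed: "eventually (\<lambda>t. (Gpert d m I t ^^ p) (w t) = w t) (nhds 0)"
    using assms unfolding periodic_continuation_def by auto
  have "eventually (\<lambda>t. w t $ j = w0 $ j) (nhds 0)" if "j \<noteq> m" for j
  proof -
    have "eventually (\<lambda>t. w t $ j \<in> {z. z ^ d ^ p = z}) (nhds 0)"
      using w_fixed
    proof eventually_elim
      case (elim t)
      then have "(Gpert d m I t ^^ p) (w t) $ j = w t $ j"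
        by simp
      then show ?case
        by (simp add: Gpert_iterate_nth_other[OF that])
    qed
    from eventually_eq_if_finite_values[OF continuous_component[OF w_cont]
        finite_power_fixed_points[OF two_le_degree_power] this]
    show ?thesis
      using w_0 by simp
  qed
  then show ?thesis
    by (intro eventually_all_finite) (auto intro: eventually_mono)
qed

lemma has_field_derivative_jac_diag_other:
  assumes "periodic_continuation (Gpert d m I) p w0 w" and "k \<noteq> m"
  shows "((\<lambda>t. jac_diag (Gpert d m I t ^^ p) k (w t)) has_field_derivative 0) (at 0)"
proof -
  have "eventually (\<lambda>t. jac_diag (Gpert d m I t ^^ p) k (w t) = of_nat (d ^ p) * (w0 $ k) ^ (d ^ p - 1)) (nhds 0)"
    using periodic_continuation_other_coordinates[OF assms(1)]
    by eventually_elim (simp add: jac_diag_Gpert_iterate_other assms(2))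
  then show ?thesis
    by (rule DERIV_cong_ev[OF refl _ refl, THEN iffD2]) (rule DERIV_const)
qed

lemma periodic_continuation_perturbed_coordinate:
  assumes "periodic_continuation (Gpert d m I) p w0 w"
  defines "x \<equiv> \<lambda>t. w t $ m"
  shows "eventually (\<lambda>t. w t = vec_upd w0 m (x t)) (nhds 0)"
    and "eventually (\<lambda>t. orbit d (I m) (slice_coeff d w0 I m) p t (x t) = x t) (nhds 0)"
    and "(x has_field_derivative deriv x 0) (at 0)"
proof -
  have w_0: "w 0 = w0" and w_cont: "isCont w 0"
    and w_fixed: "eventually (\<lambda>t. (Gpert d m I t ^^ p) (w t) = w t) (nhds 0)"
    using assms unfolding periodic_continuation_def by auto
  show on_slice: "eventually (\<lambda>t. w t = vec_upd w0 m (x t)) (nhds 0)"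
    using periodic_continuation_other_coordinates[OF assms(1)]
    by eventually_elim (auto simp: x_def vec_upd_def vec_eq_iff)
  show x_fixed: "eventually (\<lambda>t. orbit d (I m) (slice_coeff d w0 I m) p t (x t) = x t) (nhds 0)"
    using on_slice w_fixed
  proof eventually_elim
    case (elim t)
    then have "(Gpert d m I t ^^ p) (vec_upd w0 m (x t)) $ m = x t"
      by (simp add: x_def)
    then show ?case
      by (simp add: Gpert_iterate_slice)
  qed
  have "x 0 = w0 $ m"
    using w_0 by (simp add: x_def)
  moreover have "isCont x 0"
    unfolding x_def using w_cont by (rule continuous_component)
  moreover have "isCont (\<lambda>t. orbit_time_divdiff d (I m) (slice_coeff d w0 I m) p t (w0 $ m)) 0"
    unfolding isCont_def by (intro tendsto_intros tendsto_ident_at)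
  ultimately have "x field_differentiable (at 0)"
    using fixed_point_branch_differentiable[OF orbit_diff isCont_orbit_divdiff slice_orbit_divdiff_ne_1
        orbit_time_diff _ slice_orbit_fixed _ _ x_fixed] by blast
  then show "(x has_field_derivative deriv x 0) (at 0)"
    by (simp add: field_differentiable_derivI)
qed

lemma has_field_derivative_jac_diag_perturbed:
  assumes "periodic_continuation (Gpert d m I) p w0 w"
  shows "((\<lambda>t. jac_diag (Gpert d m I t ^^ p) m (w t)) has_field_derivative
    (of_nat (I m) * of_nat d ^ (p - 1) - of_nat d ^ p) *
      (\<Sum>q<p. (monomial (drop_index I m) w0) ^ (d ^ q) *
        (w0 $ m) powi (int (d ^ q) * (int (I m) - int d)))) (at 0)"
proof -
  let ?c = "slice_coeff d w0 I m" and ?a = "w0 $ m"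
  define x where "x t = w t $ m" for t
  note perturbed = periodic_continuation_perturbed_coordinate[OF assms, folded x_def]
  have "x 0 = ?a"
    using assms by (simp add: periodic_continuation_def x_def)
  have "eventually (\<lambda>t. jac_diag (Gpert d m I t ^^ p) m (w t) = orbit_divdiff d (I m) ?c p t (x t) (x t)) (nhds 0)"
    using perturbed(1) by eventually_elim (simp add: jac_diag_Gpert_iterate_slice)
  moreover have "(?a ^ d ^ q) powi (int (I m) - int d) = ?a powi (int (d ^ q) * (int (I m) - int d))" for q
    by (simp add: power_int_mult flip: power_int_of_nat)
  ultimately show ?thesis
    using has_field_derivative_orbit_multiplier[OF d _ \<open>x 0 = ?a\<close> perturbed(3) coordinate_periodic perturbed(2)]
      nonzero
    by (subst DERIV_cong_ev[OF refl _ refl]) (simp_all add: slice_coeff_def)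
qed

end

theorem lemma4p1:
  fixes d p :: nat and w0 :: "complex^'n" and I :: "'n \<Rightarrow> nat" and k m :: 'n
  assumes "d \<ge> 2"
    and "periodic_point_of_period (F0 d) p w0"
    and "\<forall>j. w0 $ j \<noteq> 0"
  shows "(\<exists>w. periodic_continuation (Gpert d m I) p w0 w) \<and>
    (\<forall>w. periodic_continuation (Gpert d m I) p w0 w \<longrightarrow>
      ((\<lambda>t. jac_diag (Gpert d m I t ^^ p) k (w t)) has_field_derivative
        (if m \<noteq> k then 0
         else (of_nat (I k) * of_nat d ^ (p - 1) - of_nat d ^ p) *
           (\<Sum>i<p. (monomial (drop_index I k) w0) ^ (d ^ i) *
              (w0 $ k) powi (int (d ^ i) * (int (I k) - int d))))) (at 0))"
proof -
  have p: "p \<ge> 1" and periodic: "(F0 d ^^ p) w0 = w0"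
    using assms(2) unfolding periodic_point_of_period_def by auto
  note setting = assms(1) p assms(3) periodic
  show ?thesis
    using periodic_continuation_exists[OF setting] has_field_derivative_jac_diag_perturbed[OF setting]
      has_field_derivative_jac_diag_other[OF setting]
    by auto
qed

end
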